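(* Let $\mathfrak{t},\mathfrak{w}$ be sesquilinear forms on $\mathbb{C}^n$ with $\mathfrak{w}\geq 0$. (i) The following statements are equivalent: (a) $\mathfrak{t}$ is $\mathfrak{w}$-left bounded; (b) $\mathfrak{t}$ is $\mathfrak{w}$-left regular; (c) $\ker(\mathfrak{w})\subseteq \ker(\mathfrak{t})$. (ii) $\mathfrak{t}$ is $\mathfrak{w}$-left strongly singular if and only if $\ker(\mathfrak{w})+\ker(\mathfrak{t})=\mathbb{C}^n$.
   Context: A sesquilinear form $\mathfrak{t}$ on a complex vector space $\mathcal{D}$ is linear in the first and anti-linear in the second component; $\mathfrak{t}[f]:=\mathfrak{t}(f,f)$, and $\mathfrak{t}\geq 0$ means $\mathfrak{t}[f]\geq 0$ for all $f$. $\ker(\mathfrak{t}):=\{f\in\mathcal{D}:\mathfrak{t}(f,g)=0\ \forall g\in\mathcal{D}\}$. For a non-negative form $\mathfrak{w}$, a non-negative form $\mathfrak{u}$ is $\mathfrak{w}$-absolutely continuous ($\mathfrak{u}\ll\mathfrak{w}$) if $\mathfrak{w}[f_n]\to 0$ and $\mathfrak{u}[f_n-f_m]\to 0$ imply $\mathfrak{u}[f_n]\to 0$; it is $\mathfrak{w}$-singular ($\mathfrak{u}\perp\mathfrak{w}$) if for every $f\in\mathcal{D}$ there is a sequence $\{f_n\}\subset\mathcal{D}$ with $\mathfrak{w}[f_n]\to 0$ and $\mathfrak{u}[f-f_n]\to 0$. $M_l(\mathfrak{t})$ denotes the set of non-negative forms $\mathfrak{s}_1$ on $\mathcal{D}$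 for which there is a non-negative form $\mathfrak{s}_2$ on $\mathcal{D}$ with $|\mathfrak{t}(f,g)|\leq \mathfrak{s}_1[f]^{1/2}\mathfrak{s}_2[g]^{1/2}$ for all $f,g\in\mathcal{D}$. $\mathfrak{t}$ is called $\mathfrak{w}$-left regular if some $\mathfrak{s}_1\in M_l(\mathfrak{t})$ satisfies $\mathfrak{s}_1\ll\mathfrak{w}$; $\mathfrak{w}$-left strongly singular if some $\mathfrak{s}_1\in M_l(\mathfrak{t})$ satisfies $\mathfrak{s}_1\perp\mathfrak{w}$; $\mathfrak{w}$-left bounded if $C\mathfrak{w}\in M_l(\mathfrak{t})$ for some $C>0$. Here $\mathcal{D}=\mathbb{C}^n$. *)

theory Defs
  imports "HOL-Analysis.Analysis"
begin

type_synonym 'n form = "complex ^ 'n \<Rightarrow> complex ^ 'n \<Rightarrow> complex"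

definition sesquilinear :: "'n::finite form \<Rightarrow> bool" where
  "sesquilinear t \<longleftrightarrow>
     (\<forall>f g h. t (f + g) h = t f h + t g h) \<and>
     (\<forall>a f h. t (a *s f) h = a * t f h) \<and>
     (\<forall>f g h. t f (g + h) = t f g + t f h) \<and>
     (\<forall>a f g. t f (a *s g) = cnj a * t f g)"

definition nonneg_form :: "'n::finite form \<Rightarrow> bool" where
  "nonneg_form t \<longleftrightarrow> (\<forall>f. t f f \<in> \<real> \<and> 0 \<le> Re (t f f))"

definition quad :: "'n::finite form \<Rightarrow> complex ^ 'n \<Rightarrow> real" where
  "quad t f = Re (t f f)"

definition form_ker :: "'n::finite form \<Rightarrow> (complex ^ 'n) set" where
  "form_ker t = {f. \<forall>g. t f g = 0}"

definition abs_continuous :: "'n::finite form \<Rightarrow> 'n form \<Rightarrow> bool" where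
  "abs_continuous u w \<longleftrightarrow>
     (\<forall>fs :: nat \<Rightarrow> complex ^ 'n.
        (\<lambda>k. quad w (fs k)) \<longlonglongrightarrow> 0 \<longrightarrow>
        (\<forall>e>0. \<exists>N. \<forall>m\<ge>N. \<forall>k\<ge>N. quad u (fs k - fs m) < e) \<longrightarrow>
        (\<lambda>k. quad u (fs k)) \<longlonglongrightarrow> 0)"

definition singular_form :: "'n::finite form \<Rightarrow> 'n form \<Rightarrow> bool" where
  "singular_form u w \<longleftrightarrow>
     (\<forall>f. \<exists>fs :: nat \<Rightarrow> complex ^ 'n.
        (\<lambda>k. quad w (fs k)) \<longlonglongrightarrow> 0 \<and> (\<lambda>k. quad u (f - fs k)) \<longlonglongrightarrow> 0)"

definition M_l :: "'n::finite form \<Rightarrow> 'n form set" where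
  "M_l t = {s1. sesquilinear s1 \<and> nonneg_form s1 \<and>
     (\<exists>s2. sesquilinear s2 \<and> nonneg_form s2 \<and>
        (\<forall>f g. cmod (t f g) \<le> sqrt (quad s1 f) * sqrt (quad s2 g)))}"

definition left_regular :: "'n::finite form \<Rightarrow> 'n form \<Rightarrow> bool" where
  "left_regular t w \<longleftrightarrow> (\<exists>s1\<in>M_l t. abs_continuous s1 w)"

definition left_strongly_singular :: "'n::finite form \<Rightarrow> 'n form \<Rightarrow> bool" where
  "left_strongly_singular t w \<longleftrightarrow> (\<exists>s1\<in>M_l t. singular_form s1 w)"

definition left_bounded :: "'n::finite form \<Rightarrow> 'n form \<Rightarrow> bool" where
  "left_bounded t w \<longleftrightarrow> (\<exists>C::real. C > 0 \<and> (\<lambda>f g. complex_of_real C * w f g) \<in> M_l t)"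

end

theory Submission
  imports Defs
begin

text \<open>
  A non-negative form w on C^n controls the distance to its kernel: every f lies within
  C w[f]^(1/2) of ker w, because w[.] attains a positive minimum on the unit sphere of the
  orthogonal complement of ker w.  Hence if ker w \<subseteq> ker t, choosing k \<in> ker w close to f gives
  |t(f,g)| = |t(f - k,g)| \<le> B |f - k| |g| \<le> B C w[f]^(1/2) |g|, so t is w-left bounded.
  Conversely every s1 \<in> M_l(t) has ker s1 \<subseteq> ker t, and w-absolute continuity of s1, tested on
  constant sequences, forces ker w \<subseteq> ker s1.

  For singularity, if w[f_n] \<rightarrow> 0 and s1[f - f_n] \<rightarrow> 0, the distance bounds for w and s1 exhibit
  f as a limit of elements of the closed subspace ker w + ker t.  Conversely
  rho(f,g) = \<Sum>_j t(f,e_j) cnj(t(g,e_j)) lies in M_l(t) and vanishes on ker t, so it is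
  w-singular once ker w + ker t is the whole space.
\<close>

lemma scaleR_eq_smult_of_real: "(c::real) *\<^sub>R (f::complex^'n) = complex_of_real c *s f"
  by (simp add: vec_eq_iff) (simp add: scaleR_conv_of_real)

context
  fixes s :: "'n::finite form"
  assumes ses: "sesquilinear s"
begin

lemma sesquilinear_add_left: "s (f + g) h = s f h + s g h"
  using ses by (simp add: sesquilinear_def)

lemma sesquilinear_add_right: "s f (g + h) = s f g + s f h"
  using ses by (simp add: sesquilinear_def)

lemma sesquilinear_smult_left: "s (a *s f) h = a * s f h"
  using ses by (simp add: sesquilinear_def)

lemma sesquilinear_smult_right: "s f (a *s g) = cnj a * s f g"
  using ses by (simp add: sesquilinear_def)

lemma sesquilinear_zero_left: "s 0 g = 0"
  using sesquilinear_add_left[of 0 0 g] by simp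

lemma sesquilinear_zero_right: "s f 0 = 0"
  using sesquilinear_add_right[of f 0 0] by simp

lemma sesquilinear_diff_left: "s (f - g) h = s f h - s g h"
  using sesquilinear_add_left[of "f - g" g h] by simp

lemma sesquilinear_scaleR_left: "s (c *\<^sub>R f) h = c *\<^sub>R s f h"
  by (simp add: scaleR_eq_smult_of_real sesquilinear_smult_left scaleR_conv_of_real)

lemma sesquilinear_scaleR_right: "s f (c *\<^sub>R g) = c *\<^sub>R s f g"
  by (simp add: scaleR_eq_smult_of_real sesquilinear_smult_right scaleR_conv_of_real)

lemma sesquilinear_sum_right: "s f (sum h A) = (\<Sum>j\<in>A. s f (h j))"
  by (induction A rule: infinite_finite_induct)
    (simp_all add: sesquilinear_zero_right sesquilinear_add_right)

lemma sesquilinear_basis_expansion_right: "s f g = (\<Sum>j\<in>UNIV. cnj (g$j) * s f (axis j 1))"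
  using basis_expansion[of g]
  by (metis (no_types, lifting) sesquilinear_sum_right sesquilinear_smult_right sum.cong)

lemma sesquilinear_bounded_bilinear: "bounded_bilinear s"
proof -
  have "bilinear s"
    unfolding bilinear_def
    by (auto intro!: linearI simp: sesquilinear_add_left sesquilinear_add_right
        sesquilinear_scaleR_left sesquilinear_scaleR_right)
  then show ?thesis
    using bilinear_conv_bounded_bilinear by blast
qed

lemma sesquilinear_norm_bound: "\<exists>B>0. \<forall>f g. cmod (s f g) \<le> B * norm f * norm g"
  using bounded_bilinear.pos_bounded[OF sesquilinear_bounded_bilinear]
  by (metis mult.commute mult.left_commute)

lemma subspace_form_ker: "subspace (form_ker s)"
  unfolding subspace_def form_ker_def
  by (auto simp: sesquilinear_zero_left sesquilinear_add_left sesquilinear_scaleR_left)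

lemma quad_scaleR: "quad s (r *\<^sub>R f) = r\<^sup>2 * quad s f"
  by (simp add: quad_def sesquilinear_scaleR_left sesquilinear_scaleR_right power2_eq_square)

end

lemma nonneg_linear_plus_quadratic_imp_zero:
  fixes x S :: real
  assumes "S \<ge> 0" and "\<forall>r. 0 \<le> 2 * r * x + r\<^sup>2 * S"
  shows "x = 0"
proof (rule ccontr)
  assume "x \<noteq> 0"
  define r where "r = - x / (S + 1)"
  have x: "x = - r * (S + 1)"
    using assms(1) unfolding r_def by (simp add: field_simps)
  with \<open>x \<noteq> 0\<close> have "r \<noteq> 0" by auto
  have "0 \<le> 2 * r * x + r\<^sup>2 * S"
    using assms(2) by blast
  also have "\<dots> = - (r\<^sup>2 * (S + 2))"
    by (simp add: x power2_eq_square algebra_simps)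
  also have "\<dots> < 0"
    using assms(1) \<open>r \<noteq> 0\<close> by (simp add: add_nonneg_pos)
  finally show False by simp
qed

context
  fixes s :: "'n::finite form"
  assumes ses: "sesquilinear s" and nonneg: "nonneg_form s"
begin

lemma quad_nonneg: "0 \<le> quad s f"
  using nonneg by (simp add: nonneg_form_def quad_def)

lemma nonneg_form_hermitian: "s f g = cnj (s g f)"
proof -
  have real: "s (f + g) (f + g) \<in> \<real>" "s (f + \<i> *s g) (f + \<i> *s g) \<in> \<real>"
    "s f f \<in> \<real>" "s g g \<in> \<real>"
    using nonneg by (auto simp: nonneg_form_def)
  have "s (f + g) (f + g) = s f f + s f g + s g f + s g g"
    by (simp add: sesquilinear_add_left[OF ses] sesquilinear_add_right[OF ses])
  with real have "Im (s f g + s g f) = 0"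
    by (simp add: complex_is_Real_iff)
  moreover have "s (f + \<i> *s g) (f + \<i> *s g) = s f f - \<i> * s f g + \<i> * s g f + s g g"
    by (simp add: sesquilinear_add_left[OF ses] sesquilinear_add_right[OF ses]
        sesquilinear_smult_left[OF ses] sesquilinear_smult_right[OF ses] algebra_simps)
  with real have "Re (s g f) - Re (s f g) = 0"
    by (simp add: complex_is_Real_iff)
  ultimately show ?thesis
    by (simp add: complex_eq_iff)
qed

lemma quad_add_scaleR: "quad s (f + r *\<^sub>R g) = quad s f + 2 * r * Re (s f g) + r\<^sup>2 * quad s g"
proof -
  have "s (f + r *\<^sub>R g) (f + r *\<^sub>R g) = s f f + r *\<^sub>R s f g + r *\<^sub>R s g f + (r * r) *\<^sub>R s g g"
    by (simp add: sesquilinear_add_left[OF ses] sesquilinear_add_right[OF ses]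
        sesquilinear_scaleR_left[OF ses] sesquilinear_scaleR_right[OF ses] scaleR_add_right)
  moreover have "Re (s g f) = Re (s f g)"
    using nonneg_form_hermitian[of g f] by simp
  ultimately show ?thesis
    by (simp add: quad_def power2_eq_square)
qed

lemma quad_eq_zero_imp_form_ker:
  assumes "quad s f = 0"
  shows "f \<in> form_ker s"
proof -
  have Re_zero: "Re (s f g) = 0" for g
    using quad_nonneg[of "f + _ *\<^sub>R g"] quad_nonneg[of g]
    by (intro nonneg_linear_plus_quadratic_imp_zero) (auto simp: quad_add_scaleR assms)
  have "s f g = 0" for g
    using Re_zero[of g] Re_zero[of "\<i> *s g"]
    by (simp add: sesquilinear_smult_right[OF ses] complex_eq_iff)
  then show ?thesis
    by (simp add: form_ker_def)
qed

lemma quad_coercive_on_orthogonal_form_ker: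
  "\<exists>c>0. \<forall>z. (\<forall>k\<in>form_ker s. orthogonal k z) \<longrightarrow> c * (norm z)\<^sup>2 \<le> quad s z"
proof -
  define Z where "Z = {z. \<forall>k\<in>form_ker s. orthogonal k z}"
  have "subspace Z"
    unfolding Z_def by (rule subspace_orthogonal_to_vectors)
  define S where "S = Z \<inter> sphere 0 1"
  have "compact S"
    unfolding S_def using \<open>subspace Z\<close> by (intro closed_Int_compact closed_subspace compact_sphere)
  have normalized: "inverse (norm z) *\<^sub>R z \<in> S" if "z \<in> Z" "z \<noteq> 0" for z
    using that \<open>subspace Z\<close> unfolding S_def by (auto simp: subspace_scale)
  show ?thesis
  proof (cases "S = {}")
    case True
    then have "Z \<subseteq> {0}"
      using normalized by blast
    then show ?thesis
      unfolding Z_def by (intro exI[of _ 1]) (auto simp: quad_def sesquilinear_zero_left[OF ses])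
  next
    case False
    have "continuous_on S (quad s)"
      unfolding quad_def
      by (intro continuous_intros bounded_bilinear.continuous_on[OF sesquilinear_bounded_bilinear[OF ses]])
    then obtain z0 where z0: "z0 \<in> S" "\<And>z. z \<in> S \<Longrightarrow> quad s z0 \<le> quad s z"
      using continuous_attains_inf[OF \<open>compact S\<close> False] by blast
    have "quad s z0 \<noteq> 0"
    proof
      assume "quad s z0 = 0"
      then have "z0 \<in> form_ker s"
        by (rule quad_eq_zero_imp_form_ker)
      with z0(1) show False
        by (auto simp: S_def Z_def orthogonal_self)
    qed
    then have "quad s z0 > 0"
      using quad_nonneg[of z0] by linarith
    moreover have "quad s z0 * (norm z)\<^sup>2 \<le> quad s z" if "z \<in> Z" for z
    proof (cases "z = 0")
      case True
      then show ?thesis by (simp add: quad_nonneg)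
    next
      case False
      have "quad s z0 \<le> quad s (inverse (norm z) *\<^sub>R z)"
        using z0(2) normalized[OF that False] by blast
      also have "\<dots> = (inverse (norm z))\<^sup>2 * quad s z"
        by (rule quad_scaleR[OF ses])
      finally show ?thesis
        using False by (simp add: field_simps)
    qed
    ultimately show ?thesis
      unfolding Z_def by blast
  qed
qed

lemma dist_form_ker_le_sqrt_quad:
  "\<exists>C>0. \<forall>f. \<exists>k\<in>form_ker s. norm (f - k) \<le> C * sqrt (quad s f)"
proof -
  obtain c where c: "c > 0"
    "\<And>z. \<forall>k\<in>form_ker s. orthogonal k z \<Longrightarrow> c * (norm z)\<^sup>2 \<le> quad s z"
    using quad_coercive_on_orthogonal_form_ker by blast
  have "\<exists>k\<in>form_ker s. norm (f - k) \<le> inverse (sqrt c) * sqrt (quad s f)" for f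
  proof -
    have span_ker: "span (form_ker s) = form_ker s"
      using subspace_form_ker[OF ses] by (rule span_eq_iff[THEN iffD2])
    obtain k z where kz: "k \<in> form_ker s" "\<And>k'. k' \<in> form_ker s \<Longrightarrow> orthogonal z k'" "f = k + z"
      using orthogonal_subspace_decomp_exists[of "form_ker s" f] unfolding span_ker by blast
    have "s z k = 0"
      using nonneg_form_hermitian[of z k] kz(1) by (simp add: form_ker_def)
    with kz have "quad s f = quad s z"
      by (simp add: quad_def form_ker_def sesquilinear_add_left[OF ses] sesquilinear_add_right[OF ses])
    moreover have "c * (norm z)\<^sup>2 \<le> quad s z"
      using kz(2) by (intro c(2)) (simp add: orthogonal_commute)
    ultimately have "sqrt (c * (norm z)\<^sup>2) \<le> sqrt (quad s f)"
      by simp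
    then have "sqrt c * norm z \<le> sqrt (quad s f)"
      by (simp add: real_sqrt_mult)
    then show ?thesis
      using kz(1,3) c(1) by (intro bexI[of _ k]) (simp_all add: field_simps)
  qed
  then show ?thesis
    using c(1) by (intro exI[of _ "inverse (sqrt c)"]) auto
qed

end

definition euclid_form :: "'n::finite form" where
  "euclid_form f g = (\<Sum>j\<in>UNIV. f$j * cnj (g$j))"

lemma sesquilinear_euclid_form: "sesquilinear euclid_form"
  unfolding sesquilinear_def euclid_form_def
  by (simp add: sum.distrib sum_distrib_left algebra_simps)

lemma euclid_form_self: "euclid_form f f = complex_of_real ((norm f)\<^sup>2)"
proof -
  have "euclid_form f f = (\<Sum>j\<in>UNIV. complex_of_real ((norm (f$j))\<^sup>2))"
    unfolding euclid_form_def by (simp only: complex_norm_square)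
  also have "\<dots> = complex_of_real (\<Sum>j\<in>UNIV. (norm (f$j))\<^sup>2)"
    by simp
  also have "(\<Sum>j\<in>UNIV. (norm (f$j))\<^sup>2) = (norm f)\<^sup>2"
    unfolding norm_vec_def L2_set_def by (simp add: sum_nonneg)
  finally show ?thesis .
qed

lemma nonneg_form_euclid_form: "nonneg_form euclid_form"
  unfolding nonneg_form_def by (simp add: euclid_form_self)

lemma sqrt_quad_euclid_form: "sqrt (quad euclid_form g) = norm g"
  by (simp add: quad_def euclid_form_self)

lemma euclid_form_cauchy_schwarz: "cmod (euclid_form f g) \<le> norm f * norm g"
proof -
  have "cmod (euclid_form f g) \<le> (\<Sum>j\<in>UNIV. \<bar>cmod (f$j)\<bar> * \<bar>cmod (g$j)\<bar>)"
    unfolding euclid_form_def by (rule order_trans[OF norm_sum]) (simp add: norm_mult)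
  also have "\<dots> \<le> L2_set (\<lambda>j. cmod (f$j)) UNIV * L2_set (\<lambda>j. cmod (g$j)) UNIV"
    by (rule L2_set_mult_ineq)
  finally show ?thesis
    by (simp add: norm_vec_def)
qed

lemma M_l_form_ker_subset:
  assumes "s \<in> M_l t"
  shows "form_ker s \<subseteq> form_ker t"
proof
  fix k assume "k \<in> form_ker s"
  then have "quad s k = 0"
    by (simp add: form_ker_def quad_def)
  moreover obtain s2 where "\<forall>f g. cmod (t f g) \<le> sqrt (quad s f) * sqrt (quad s2 g)"
    using assms unfolding M_l_def by blast
  ultimately show "k \<in> form_ker t"
    by (simp add: form_ker_def) (metis mult_zero_left norm_le_zero_iff real_sqrt_zero)
qed

lemma M_l_intro_norm:
  assumes "sesquilinear s" and "nonneg_form s"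
    and "\<And>f g. cmod (t f g) \<le> sqrt (quad s f) * norm g"
  shows "s \<in> M_l t"
  unfolding M_l_def
  using assms sesquilinear_euclid_form nonneg_form_euclid_form
  by (auto simp: sqrt_quad_euclid_form)

lemma left_bounded_imp_left_regular:
  assumes "left_bounded t w"
  shows "left_regular t w"
proof -
  obtain C where C: "(\<lambda>f g. complex_of_real C * w f g) \<in> M_l t"
    using assms unfolding left_bounded_def by blast
  have "abs_continuous (\<lambda>f g. complex_of_real C * w f g) w"
    unfolding abs_continuous_def quad_def
    by (auto dest: tendsto_mult_right_zero[of _ _ C])
  with C show ?thesis
    unfolding left_regular_def by blast
qed

lemma left_regular_imp_form_ker_subset:
  assumes "left_regular t w"
  shows "form_ker w \<subseteq> form_ker t"
proof
  fix f assume f: "f \<in> form_ker w"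
  obtain s where s: "s \<in> M_l t" "abs_continuous s w"
    using assms unfolding left_regular_def by blast
  have ses: "sesquilinear s" and nonneg: "nonneg_form s"
    using s(1) by (simp_all add: M_l_def)
  have "quad w f = 0"
    using f by (simp add: form_ker_def quad_def)
  then have "(\<lambda>_. quad s f) \<longlonglongrightarrow> 0"
    using s(2) unfolding abs_continuous_def
    by (auto dest!: spec[of _ "\<lambda>_. f"] simp: quad_def sesquilinear_zero_left[OF ses])
  then have "f \<in> form_ker s"
    by (intro quad_eq_zero_imp_form_ker[OF ses nonneg]) (simp add: LIMSEQ_const_iff)
  then show "f \<in> form_ker t"
    using M_l_form_ker_subset[OF s(1)] by blast
qed

lemma form_ker_subset_imp_left_bounded:
  assumes t: "sesquilinear t" and w: "sesquilinear w" "nonneg_form w"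
    and ker: "form_ker w \<subseteq> form_ker t"
  shows "left_bounded t w"
proof -
  obtain B where B: "B > 0" "\<And>f g. cmod (t f g) \<le> B * norm f * norm g"
    using sesquilinear_norm_bound[OF t] by blast
  obtain D where D: "D > 0" "\<And>f. \<exists>k\<in>form_ker w. norm (f - k) \<le> D * sqrt (quad w f)"
    using dist_form_ker_le_sqrt_quad[OF w] by blast
  define C where "C = (B * D)\<^sup>2"
  let ?s = "\<lambda>f g. complex_of_real C * w f g"
  have "cmod (t f g) \<le> sqrt (quad ?s f) * norm g" for f g
  proof -
    obtain k where k: "k \<in> form_ker w" "norm (f - k) \<le> D * sqrt (quad w f)"
      using D(2) by blast
    have "t f g = t (f - k) g"
      using k(1) ker by (auto simp: form_ker_def sesquilinear_diff_left[OF t])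
    then have "cmod (t f g) \<le> B * norm (f - k) * norm g"
      using B(2) by simp
    also have "\<dots> \<le> B * (D * sqrt (quad w f)) * norm g"
      using B(1) k(2) by (simp add: mult_right_mono)
    also have "B * (D * sqrt (quad w f)) = sqrt (quad ?s f)"
      using B(1) D(1) by (simp add: quad_def C_def real_sqrt_mult)
    finally show ?thesis .
  qed
  moreover have "sesquilinear ?s" "nonneg_form ?s"
    using w by (auto simp: sesquilinear_def nonneg_form_def algebra_simps C_def)
  ultimately have "?s \<in> M_l t"
    by (intro M_l_intro_norm)
  moreover have "C > 0"
    using B(1) D(1) by (simp add: C_def)
  ultimately show ?thesis
    unfolding left_bounded_def by blast
qed

lemma left_strongly_singular_imp_form_ker_sum:
  assumes t: "sesquilinear t" and w: "sesquilinear w" "nonneg_form w"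
    and sing: "left_strongly_singular t w"
  shows "{a + b |a b. a \<in> form_ker w \<and> b \<in> form_ker t} = UNIV"
proof -
  define K where "K = {a + b |a b. a \<in> form_ker w \<and> b \<in> form_ker t}"
  obtain s where s: "s \<in> M_l t" "singular_form s w"
    using sing unfolding left_strongly_singular_def by blast
  have ses: "sesquilinear s" and nonneg: "nonneg_form s"
    using s(1) by (auto simp: M_l_def)
  obtain C1 P1 where P1: "\<And>f. P1 f \<in> form_ker w \<and> norm (f - P1 f) \<le> C1 * sqrt (quad w f)"
    using dist_form_ker_le_sqrt_quad[OF w] by metis
  obtain C2 P2 where P2: "\<And>f. P2 f \<in> form_ker s \<and> norm (f - P2 f) \<le> C2 * sqrt (quad s f)"
    using dist_form_ker_le_sqrt_quad[OF ses nonneg] by metis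
  have "closed K"
    unfolding K_def by (intro closed_subspace subspace_sums subspace_form_ker w t)
  have "f \<in> K" for f
  proof -
    obtain fs where fs: "(\<lambda>n. quad w (fs n)) \<longlonglongrightarrow> 0" "(\<lambda>n. quad s (f - fs n)) \<longlonglongrightarrow> 0"
      using s(2) unfolding singular_form_def by blast
    define approx where "approx n = P1 (fs n) + P2 (f - fs n)" for n
    have "approx n \<in> K" for n
    proof -
      have "P1 (fs n) \<in> form_ker w" "P2 (f - fs n) \<in> form_ker t"
        using P1 P2 M_l_form_ker_subset[OF s(1)] by auto
      then show ?thesis
        unfolding K_def approx_def by blast
    qed
    define bound where "bound n = C1 * sqrt (quad w (fs n)) + C2 * sqrt (quad s (f - fs n))" for n
    have approx_close: "norm (approx n - f) \<le> bound n" for n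
    proof -
      have "approx n - f = - ((fs n - P1 (fs n)) + ((f - fs n) - P2 (f - fs n)))"
        by (simp add: approx_def algebra_simps)
      then have "norm (approx n - f) \<le> norm (fs n - P1 (fs n)) + norm ((f - fs n) - P2 (f - fs n))"
        by (simp only: norm_minus_cancel norm_triangle_ineq)
      then show ?thesis
        using P1[of "fs n"] P2[of "f - fs n"] unfolding bound_def by linarith
    qed
    have "bound \<longlonglongrightarrow> 0"
    proof -
      have "(\<lambda>n. sqrt (quad w (fs n))) \<longlonglongrightarrow> 0" "(\<lambda>n. sqrt (quad s (f - fs n))) \<longlonglongrightarrow> 0"
        using tendsto_real_sqrt[OF fs(1)] tendsto_real_sqrt[OF fs(2)] by simp_all
      then show ?thesis
        unfolding bound_def[abs_def] by (intro tendsto_add_zero tendsto_mult_right_zero)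
    qed
    then have "(\<lambda>n. approx n - f) \<longlonglongrightarrow> 0"
      by (rule Lim_null_comparison[rotated]) (simp add: approx_close)
    then have "approx \<longlonglongrightarrow> f"
      by (rule LIM_zero_cancel)
    with \<open>closed K\<close> \<open>\<And>n. approx n \<in> K\<close> show ?thesis
      using closed_sequentially[of K approx f] by blast
  qed
  then show ?thesis
    unfolding K_def by blast
qed

lemma M_l_exists_form_ker_superset:
  assumes t: "sesquilinear t"
  shows "\<exists>s\<in>M_l t. form_ker t \<subseteq> form_ker s"
proof -
  define L where "L f = (\<chi> j. t f (axis j 1))" for f
  define \<rho> where "\<rho> f g = euclid_form (L f) (L g)" for f g
  have L_add: "L (f + g) = L f + L g" and L_smult: "L (a *s f) = a *s L f" for f g a
    by (simp_all add: vec_eq_iff L_def sesquilinear_add_left[OF t] sesquilinear_smult_left[OF t])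
  have "sesquilinear \<rho>"
    unfolding sesquilinear_def \<rho>_def
    by (simp add: L_add L_smult sesquilinear_add_left[OF sesquilinear_euclid_form]
        sesquilinear_add_right[OF sesquilinear_euclid_form]
        sesquilinear_smult_left[OF sesquilinear_euclid_form]
        sesquilinear_smult_right[OF sesquilinear_euclid_form])
  moreover have "nonneg_form \<rho>"
    unfolding nonneg_form_def \<rho>_def by (simp add: euclid_form_self)
  moreover have "cmod (t f g) \<le> sqrt (quad \<rho> f) * norm g" for f g
  proof -
    have "t f g = euclid_form (L f) g"
      by (subst sesquilinear_basis_expansion_right[OF t])
        (simp add: euclid_form_def L_def mult.commute)
    then show ?thesis
      using euclid_form_cauchy_schwarz[of "L f" g]
      by (simp add: \<rho>_def quad_def euclid_form_self)
  qed
  ultimately have "\<rho> \<in> M_l t"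
    by (intro M_l_intro_norm)
  moreover have "form_ker t \<subseteq> form_ker \<rho>"
    by (auto simp: form_ker_def \<rho>_def L_def euclid_form_def)
  ultimately show ?thesis
    by blast
qed

lemma form_ker_sum_imp_left_strongly_singular:
  assumes t: "sesquilinear t"
    and sum: "{a + b |a b. a \<in> form_ker w \<and> b \<in> form_ker t} = UNIV"
  shows "left_strongly_singular t w"
proof -
  obtain s where s: "s \<in> M_l t" "form_ker t \<subseteq> form_ker s"
    using M_l_exists_form_ker_superset[OF t] by blast
  have "singular_form s w"
    unfolding singular_form_def
  proof
    fix f
    obtain a b where "f = a + b" "a \<in> form_ker w" "b \<in> form_ker t"
      using sum by blast
    then have "quad w a = 0" "quad s (f - a) = 0"
      using s(2) by (auto simp: quad_def form_ker_def)
    then show "\<exists>fs. (\<lambda>n. quad w (fs n)) \<longlonglongrightarrow> 0 \<and> (\<lambda>n. quad s (f - fs n)) \<longlonglongrightarrow> 0"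
      by (intro exI[of _ "\<lambda>_. a"]) simp
  qed
  with s(1) show ?thesis
    unfolding left_strongly_singular_def by blast
qed

theorem mainTheorem3:
  fixes t w :: "'n::finite form"
  assumes "sesquilinear t" and "sesquilinear w" and "nonneg_form w"
  shows "(left_bounded t w \<longleftrightarrow> left_regular t w) \<and>
         (left_regular t w \<longleftrightarrow> form_ker w \<subseteq> form_ker t) \<and>
         (left_strongly_singular t w \<longleftrightarrow>
            {a + b | a b. a \<in> form_ker w \<and> b \<in> form_ker t} = UNIV)"
proof -
  have regular_iff_ker: "left_regular t w \<longleftrightarrow> form_ker w \<subseteq> form_ker t"
  proof
    show "left_regular t w" if "form_ker w \<subseteq> form_ker t"
      using form_ker_subset_imp_left_bounded[OF assms that] by (rule left_bounded_imp_left_regular)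
  qed (rule left_regular_imp_form_ker_subset)
  moreover have "left_bounded t w \<longleftrightarrow> left_regular t w"
    using regular_iff_ker form_ker_subset_imp_left_bounded[OF assms] left_bounded_imp_left_regular
    by blast
  moreover have "left_strongly_singular t w \<longleftrightarrow>
      {a + b | a b. a \<in> form_ker w \<and> b \<in> form_ker t} = UNIV"
    using left_strongly_singular_imp_form_ker_sum[OF assms] form_ker_sum_imp_left_strongly_singular[OF assms(1)]
    by blast
  ultimately show ?thesis
    by blast
qed

end
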